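(* Let $B_3$ be the braid group on three strands with standard generators $\sigma_1,\sigma_2$ (relation $\sigma_1\sigma_2\sigma_1=\sigma_2\sigma_1\sigma_2$). There is no element $a\in B_3$ satisfying $a^2=(\sigma_1\sigma_2)^{-1}$. Consequently none of the objects $\hat\alpha$, $\hat\beta=\sigma_1^{-1}\hat\alpha\sigma_1$, $|\hat\omega=\hat\alpha\sigma_1$, $\hat\omega|=\sigma_2\hat\alpha$, where $\hat\alpha$ is required to satisfy $\hat\alpha^2=(\sigma_1\sigma_2)^{-1}$, can be represented by a braid on three strands.
   Context: The objects $\hat\alpha,\hat\beta,|\hat\omega,\hat\omega|$ are formal markers inserted on the three strands of a leg to represent edge twists that are incompatible with the states of the two end vertices of the edge; consistency with compatible twists forces the relations $\hat\alpha^2=\sigma_2^{-1}\sigma_1^{-1}=(\sigma_1\sigma_2)^{-1}$, $\hat\beta=\sigma_1^{-1}\hat\alpha\sigma_1=\sigma_2\hat\alpha\sigma_2^{-1}$, $|\hat\omega=\hat\alpha\sigma_1$, $\hat\omega|=\sigma_2\hat\alpha$. Braid words are read top to bottom. *)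

theory Defs
  imports Main
begin

text \<open>Multiplication is concatenation (braid words read top to bottom, left to right).\<close>

datatype gen = S1 | S2

type_synonym bword = "(gen \<times> bool) list"   (* (g, True) = g, (g, False) = g^-1 *)

inductive braid_eq :: "bword \<Rightarrow> bword \<Rightarrow> bool" where
  refl: "braid_eq u u"
| sym: "braid_eq u v \<Longrightarrow> braid_eq v u"
| trans: "braid_eq u v \<Longrightarrow> braid_eq v w \<Longrightarrow> braid_eq u w"
| cancel: "braid_eq (u @ [(g, b), (g, \<not> b)] @ v) (u @ v)"
| braid: "braid_eq (u @ [(S1, True), (S2, True), (S1, True)] @ v)
                   (u @ [(S2, True), (S1, True), (S2, True)] @ v)"

definition s1 :: bword where "s1 = [(S1, True)]"
definition s2 :: bword where "s2 = [(S2, True)]"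
definition s1inv :: bword where "s1inv = [(S1, False)]"
definition s2inv :: bword where "s2inv = [(S2, False)]"

definition s12inv :: bword where "s12inv = s2inv @ s1inv"

end

theory Submission
  imports Defs
begin

text \<open>The assignment \<open>\<sigma>\<^sub>1 \<mapsto> [[1,1],[0,1]]\<close>, \<open>\<sigma>\<^sub>2 \<mapsto> [[1,0],[-1,1]]\<close> respects free
  cancellation and the braid relation, so it induces a homomorphism \<open>B\<^sub>3 \<rightarrow> SL(2,\<int>)\<close>.
  It sends \<open>(\<sigma>\<^sub>1\<sigma>\<^sub>2)\<^sup>-\<^sup>1\<close> to \<open>[[1,-1],[1,0]]\<close>, and an integer matrix \<open>[[a,b],[c,d]]\<close> squaring
  to it satisfies \<open>b(a+d) = -1\<close> and \<open>c(a+d) = 1\<close>, hence \<open>bc = -1\<close> and \<open>a\<^sup>2 = 2\<close>, which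
  is impossible. The other three objects all presuppose such a square root \<open>\<alpha>\<close>.\<close>

type_synonym mat2 = "int \<times> int \<times> int \<times> int"  (* (a, b, c, d) is [[a, b], [c, d]] *)

fun mat2_mult :: "mat2 \<Rightarrow> mat2 \<Rightarrow> mat2" where
  "mat2_mult (a, b, c, d) (a', b', c', d') =
     (a * a' + b * c', a * b' + b * d', c * a' + d * c', c * b' + d * d')"

lemma mat2_mult_assoc: "mat2_mult (mat2_mult x y) z = mat2_mult x (mat2_mult y z)"
  by (cases x; cases y; cases z) (simp add: algebra_simps)

fun letter_mat :: "gen \<times> bool \<Rightarrow> mat2" where
  "letter_mat (S1, True) = (1, 1, 0, 1)"
| "letter_mat (S1, False) = (1, -1, 0, 1)"
| "letter_mat (S2, True) = (1, 0, -1, 1)"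
| "letter_mat (S2, False) = (1, 0, 1, 1)"

fun word_mat :: "bword \<Rightarrow> mat2" where
  "word_mat [] = (1, 0, 0, 1)"
| "word_mat (x # w) = mat2_mult (letter_mat x) (word_mat w)"

lemma word_mat_append: "word_mat (u @ v) = mat2_mult (word_mat u) (word_mat v)"
proof (induction u)
  case Nil
  show ?case by (cases "word_mat v") simp
next
  case (Cons x u)
  then show ?case by (simp add: mat2_mult_assoc)
qed

lemma letter_mat_cancel:
  "mat2_mult (letter_mat (g, b)) (mat2_mult (letter_mat (g, \<not> b)) M) = M"
  by (cases M; cases g; cases b) (simp_all add: algebra_simps)

lemma letter_mat_braid:
  "mat2_mult (letter_mat (S1, True))
     (mat2_mult (letter_mat (S2, True)) (mat2_mult (letter_mat (S1, True)) M))
   = mat2_mult (letter_mat (S2, True))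
     (mat2_mult (letter_mat (S1, True)) (mat2_mult (letter_mat (S2, True)) M))"
  by (cases M) (simp add: algebra_simps)

lemma braid_eq_word_mat: "braid_eq u v \<Longrightarrow> word_mat u = word_mat v"
proof (induction rule: braid_eq.induct)
  case (cancel u g b v)
  show ?case by (simp add: word_mat_append letter_mat_cancel del: letter_mat.simps)
next
  case (braid u v)
  show ?case using letter_mat_braid by (simp add: word_mat_append del: letter_mat.simps)
qed auto

lemma int_square_ne_two: "(a :: int) * a \<noteq> 2"
proof
  assume "a * a = 2"
  then have "(a + 1) * (a - 1) = 1" by (simp add: algebra_simps)
  then show False by (auto simp: zmult_eq_1_iff)
qed

lemma mat2_square_ne: "mat2_mult M M \<noteq> (1, -1, 1, 0)"
proof
  obtain a b c d where M: "M = (a, b, c, d)" by (cases M)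
  assume "mat2_mult M M = (1, -1, 1, 0)"
  then have diag: "a * a + b * c = 1"
    and upper: "b * (a + d) = -1" and lower: "(a + d) * c = 1"
    by (simp_all add: M algebra_simps)
  from lower have "a + d = 1 \<or> a + d = -1" by (rule pos_zmult_eq_1_iff_lemma)
  with upper lower have "b * c = -1" by auto
  with diag int_square_ne_two show False by simp
qed

lemma not_braid_eq_square_s12inv: "\<not> braid_eq (a @ a) s12inv"
proof
  assume "braid_eq (a @ a) s12inv"
  then have "word_mat (a @ a) = word_mat s12inv" by (rule braid_eq_word_mat)
  then have "mat2_mult (word_mat a) (word_mat a) = (1, -1, 1, 0)"
    by (simp add: word_mat_append s12inv_def s1inv_def s2inv_def)
  with mat2_square_ne show False by blast
qed

theorem mainTheorem3:
  shows "(\<nexists>a. braid_eq (a @ a) s12inv)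
     \<and> (\<nexists>a b. braid_eq (a @ a) s12inv \<and> braid_eq b (s1inv @ a @ s1))
     \<and> (\<nexists>a c. braid_eq (a @ a) s12inv \<and> braid_eq c (a @ s1))
     \<and> (\<nexists>a d. braid_eq (a @ a) s12inv \<and> braid_eq d (s2 @ a))"
  using not_braid_eq_square_s12inv by blast

end
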